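(* Let $\Gamma$ be a connected finite simple graph on $N\ge3$ vertices with minimum degree $d=2$ and $\varepsilon=\frac12$. If there exist distinct vertices $u\sim v\sim w$ with $\deg u=\deg v=2$ and $\deg w=3$, then $\Gamma$ is the $3$-book graph (the book graph on $8$ vertices).
   Context: For a finite simple graph $\Gamma=(V,E)$ without isolated vertices, $\deg v$ is the number of neighbours of $v$ and $\mathcal N(v)=\{w\in V: w\sim v\}$. The normalized Laplacian acts on functions $f:V\to\mathbb R$ by $\Delta f(v)=f(v)-\frac{1}{\deg v}\sum_{w\sim v}f(w)$; its eigenvalues are $0=\lambda_1\le\lambda_2\le\dots\le\lambda_N$, and $\varepsilon:=\min_i|1-\lambda_i|$. $d$ denotes the minimum vertex degree. The $m$-book graph ($m\ge1$) has vertex set $\{x,y,v_1,\dots,v_m,w_1,\dots,w_m\}$ and edges $\{x,v_i\},\{y,w_i\},\{v_i,w_i\}$ for $i=1,\dots,m$. *)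

theory Defs
  imports Complex_Main
begin

definition simple_graph :: "'a set \<Rightarrow> ('a \<Rightarrow> 'a \<Rightarrow> bool) \<Rightarrow> bool" where
  "simple_graph V E \<longleftrightarrow> finite V \<and> (\<forall>x y. E x y \<longrightarrow> x \<in> V \<and> y \<in> V)
     \<and> (\<forall>x y. E x y \<longrightarrow> E y x) \<and> (\<forall>x. \<not> E x x)"

definition connected_graph :: "'a set \<Rightarrow> ('a \<Rightarrow> 'a \<Rightarrow> bool) \<Rightarrow> bool" where
  "connected_graph V E \<longleftrightarrow> (\<forall>x\<in>V. \<forall>y\<in>V. (\<lambda>a b. a \<in> V \<and> b \<in> V \<and> E a b)\<^sup>*\<^sup>* x y)"

definition nbhd :: "'a set \<Rightarrow> ('a \<Rightarrow> 'a \<Rightarrow> bool) \<Rightarrow> 'a \<Rightarrow> 'a set" where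
  "nbhd V E v = {w \<in> V. E v w}"

definition deg :: "'a set \<Rightarrow> ('a \<Rightarrow> 'a \<Rightarrow> bool) \<Rightarrow> 'a \<Rightarrow> nat" where
  "deg V E v = card (nbhd V E v)"

definition min_degree :: "'a set \<Rightarrow> ('a \<Rightarrow> 'a \<Rightarrow> bool) \<Rightarrow> nat" where
  "min_degree V E = Min (deg V E ` V)"

definition norm_laplacian :: "'a set \<Rightarrow> ('a \<Rightarrow> 'a \<Rightarrow> bool) \<Rightarrow> ('a \<Rightarrow> real) \<Rightarrow> 'a \<Rightarrow> real" where
  "norm_laplacian V E f v = f v - (1 / real (deg V E v)) * (\<Sum>w\<in>nbhd V E v. f w)"

text \<open>Eigenvalues of the normalized Laplacian acting on functions V \<rightarrow> R
  (the operator is self-adjoint w.r.t. the degree-weighted inner product,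
  so its spectrum is real).\<close>
definition nlap_eigenvalues :: "'a set \<Rightarrow> ('a \<Rightarrow> 'a \<Rightarrow> bool) \<Rightarrow> real set" where
  "nlap_eigenvalues V E = {mu. \<exists>f. (\<exists>v\<in>V. f v \<noteq> 0) \<and>
      (\<forall>v\<in>V. norm_laplacian V E f v = mu * f v)}"

definition spectral_eps :: "'a set \<Rightarrow> ('a \<Rightarrow> 'a \<Rightarrow> bool) \<Rightarrow> real" where
  "spectral_eps V E = Min ((\<lambda>mu. \<bar>1 - mu\<bar>) ` nlap_eigenvalues V E)"

datatype book_vertex = BX | BY | BV nat | BW nat

definition book_V :: "nat \<Rightarrow> book_vertex set" where
  "book_V m = {BX, BY} \<union> BV ` {1..m} \<union> BW ` {1..m}"

definition book_E :: "nat \<Rightarrow> book_vertex \<Rightarrow> book_vertex \<Rightarrow> bool" where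
  "book_E m a b \<longleftrightarrow> (\<exists>i\<in>{1..m}.
      (a = BX \<and> b = BV i) \<or> (a = BV i \<and> b = BX) \<or>
      (a = BY \<and> b = BW i) \<or> (a = BW i \<and> b = BY) \<or>
      (a = BV i \<and> b = BW i) \<or> (a = BW i \<and> b = BV i))"

definition graph_iso :: "'a set \<Rightarrow> ('a \<Rightarrow> 'a \<Rightarrow> bool) \<Rightarrow> 'b set \<Rightarrow> ('b \<Rightarrow> 'b \<Rightarrow> bool) \<Rightarrow> bool" where
  "graph_iso V E W F \<longleftrightarrow> (\<exists>\<phi>. bij_betw \<phi> V W \<and> (\<forall>x\<in>V. \<forall>y\<in>V. E x y \<longleftrightarrow> F (\<phi> x) (\<phi> y)))"

end

theory Submission
  imports Defs "HOL-Analysis.Analysis"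
begin

text \<open>Write \<open>A\<close> for the adjacency operator and \<open>D\<close> for the degree operator, so that
  \<open>I - \<Delta> = D\<inverse>A\<close>. A minimiser of the quotient \<open>\<parallel>D\<inverse>Af\<parallel>\<^sup>2 / \<parallel>f\<parallel>\<^sup>2\<close> (norms weighted by \<open>D\<close>)
  satisfies \<open>(D\<inverse>A)\<^sup>2g = s\<^sup>2g\<close> with \<open>s\<^sup>2\<close> the minimum, which produces an eigenvalue \<open>1 \<plusminus> s\<close> of
  \<open>\<Delta>\<close>; hence the quotient is at least \<open>\<epsilon>\<^sup>2 = 1/4\<close> for every \<open>f\<close>. Testing this with functions
  supported on a few vertices near the path \<open>u v w\<close> excludes every local configuration but one:
  the other neighbour \<open>a\<close> of \<open>u\<close> has degree 3, the other neighbours \<open>b, c\<close> of \<open>w\<close> have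
  degree 2, and the two further neighbours of \<open>a\<close> are joined to \<open>b\<close> and \<open>c\<close> respectively.
  Connectedness then makes the graph the 3-book with spine \<open>w, a\<close>.\<close>

section \<open>A lower bound for the Rayleigh quotient of \<open>D\<inverse>A\<close>\<close>

lemma linear_plus_quadratic_nonneg_imp_zero:
  fixes a b :: real
  assumes "\<And>t. a * t + b * t\<^sup>2 \<ge> 0"
  shows "a = 0"
proof (rule ccontr)
  assume a: "a \<noteq> 0"
  define t where "t = \<bar>a\<bar> / (2 * (\<bar>b\<bar> + 1))"
  have t: "t > 0"
    unfolding t_def using a by (intro divide_pos_pos) auto
  have "\<bar>a\<bar> * t \<le> b * t\<^sup>2"
    using assms[of t] assms[of "- t"] by (cases "a \<ge> 0") auto
  then have "\<bar>a\<bar> \<le> b * t"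
    using t by (simp add: power2_eq_square mult.assoc[symmetric])
  also have "\<dots> \<le> \<bar>b\<bar> * t"
    using t by (intro mult_right_mono) auto
  also have "\<dots> = \<bar>a\<bar> * (\<bar>b\<bar> / (2 * (\<bar>b\<bar> + 1)))"
    by (simp add: t_def)
  also have "\<dots> < \<bar>a\<bar> * 1"
    using a by (intro mult_strict_left_mono) (auto simp: divide_less_eq)
  finally show False
    by simp
qed

lemma continuous_on_coordinate: "continuous_on S (\<lambda>f::'a \<Rightarrow> real. f z)"
  by (rule continuous_on_subset[OF continuous_on_product_coordinates]) simp

locale nonisolated_graph =
  fixes V :: "'a set" and E :: "'a \<Rightarrow> 'a \<Rightarrow> bool"
  assumes simple: "simple_graph V E"
    and deg_pos: "z \<in> V \<Longrightarrow> 0 < deg V E z"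
begin

lemma finite_V: "finite V"
  using simple by (simp add: simple_graph_def)

lemma edge_in_V: "E x y \<Longrightarrow> x \<in> V \<and> y \<in> V"
  using simple by (simp add: simple_graph_def)

lemma edge_sym: "E x y \<longleftrightarrow> E y x"
  using simple by (auto simp: simple_graph_def)

lemma edge_irrefl: "\<not> E x x"
  using simple by (simp add: simple_graph_def)

lemma mem_nbhd_iff: "y \<in> nbhd V E z \<longleftrightarrow> E z y"
  using edge_in_V by (auto simp: nbhd_def)

lemma nbhd_subset_V: "nbhd V E z \<subseteq> V"
  by (auto simp: nbhd_def)

lemma finite_nbhd: "finite (nbhd V E z)"
  using finite_V nbhd_subset_V finite_subset by blast

lemma real_deg_pos: "z \<in> V \<Longrightarrow> real (deg V E z) > 0"
  using deg_pos by simp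

definition nbr_sum :: "('a \<Rightarrow> real) \<Rightarrow> 'a \<Rightarrow> real" where
  "nbr_sum f z = (\<Sum>y\<in>nbhd V E z. f y)"

definition deg_inner :: "('a \<Rightarrow> real) \<Rightarrow> ('a \<Rightarrow> real) \<Rightarrow> real" where
  "deg_inner f g = (\<Sum>z\<in>V. real (deg V E z) * f z * g z)"

text \<open>\<open>adj_inner f g = deg_inner (D\<inverse>Af) (D\<inverse>Ag)\<close>.\<close>
definition adj_inner :: "('a \<Rightarrow> real) \<Rightarrow> ('a \<Rightarrow> real) \<Rightarrow> real" where
  "adj_inner f g = (\<Sum>z\<in>V. nbr_sum f z * nbr_sum g z / real (deg V E z))"

lemma nbr_sum_eq_sum_V: "nbr_sum f z = (\<Sum>y\<in>V. if E z y then f y else 0)"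
  unfolding nbr_sum_def nbhd_def using finite_V by (simp add: sum.inter_filter)

lemma nbr_sum_add_scaled: "nbr_sum (\<lambda>y. f y + t * g y) z = nbr_sum f z + t * nbr_sum g z"
  by (simp add: nbr_sum_def sum.distrib sum_distrib_left)

lemma nbr_sum_scale: "nbr_sum (\<lambda>y. t * f y) z = t * nbr_sum f z"
  by (simp add: nbr_sum_def sum_distrib_left)

lemma nbr_sum_restrict: "nbr_sum (\<lambda>y. if y \<in> V then f y else 0) = nbr_sum f"
  unfolding nbr_sum_def using nbhd_subset_V by (intro ext sum.cong) auto

lemma sum_nbr_sum_mult_commute: "(\<Sum>z\<in>V. nbr_sum f z * g z) = (\<Sum>z\<in>V. f z * nbr_sum g z)"
proof -
  have "(\<Sum>z\<in>V. nbr_sum f z * g z) = (\<Sum>z\<in>V. \<Sum>y\<in>V. if E z y then f y * g z else 0)"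
    by (auto simp: nbr_sum_eq_sum_V sum_distrib_right intro!: sum.cong)
  also have "\<dots> = (\<Sum>y\<in>V. \<Sum>z\<in>V. if E z y then f y * g z else 0)"
    by (rule sum.swap)
  also have "\<dots> = (\<Sum>y\<in>V. f y * nbr_sum g y)"
    by (auto simp: nbr_sum_eq_sum_V sum_distrib_left edge_sym[of _ y for y] intro!: sum.cong)
  finally show ?thesis .
qed

lemma deg_inner_commute: "deg_inner f g = deg_inner g f"
  unfolding deg_inner_def by (simp add: ac_simps)

lemma deg_inner_nonneg: "deg_inner f f \<ge> 0"
  unfolding deg_inner_def by (intro sum_nonneg) (simp add: mult.assoc)

lemma adj_inner_nonneg: "adj_inner f f \<ge> 0"
  unfolding adj_inner_def by (intro sum_nonneg) simp

lemma deg_inner_add_scaled: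
  "deg_inner (\<lambda>z. g z + t * h z) (\<lambda>z. g z + t * h z)
     = deg_inner g g + 2 * t * deg_inner g h + t\<^sup>2 * deg_inner h h"
  unfolding deg_inner_def
  by (simp add: sum.distrib sum_distrib_left power2_eq_square algebra_simps)

lemma adj_inner_add_scaled:
  "adj_inner (\<lambda>z. g z + t * h z) (\<lambda>z. g z + t * h z)
     = adj_inner g g + 2 * t * adj_inner g h + t\<^sup>2 * adj_inner h h"
  unfolding adj_inner_def nbr_sum_add_scaled
  by (simp add: sum.distrib sum_distrib_left power2_eq_square add_divide_distrib
      diff_divide_distrib algebra_simps)

lemma deg_inner_scale: "deg_inner (\<lambda>z. t * f z) (\<lambda>z. t * f z) = t\<^sup>2 * deg_inner f f"
  unfolding deg_inner_def by (simp add: sum_distrib_left power2_eq_square algebra_simps)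

lemma adj_inner_scale: "adj_inner (\<lambda>z. t * f z) (\<lambda>z. t * f z) = t\<^sup>2 * adj_inner f f"
  using adj_inner_add_scaled[of "\<lambda>_. 0" t f] by (simp add: adj_inner_def nbr_sum_def)

lemma deg_inner_eq_0_imp_zero:
  assumes "deg_inner f f = 0" and "z \<in> V"
  shows "f z = 0"
proof -
  have "\<forall>z\<in>V. real (deg V E z) * f z * f z = 0"
    using assms(1) finite_V unfolding deg_inner_def
    by (subst (asm) sum_nonneg_eq_0_iff) (auto simp: mult.assoc)
  then show ?thesis
    using assms(2) real_deg_pos[OF assms(2)] by auto
qed

lemma nlap_eigenvalues_iff:
  "\<mu> \<in> nlap_eigenvalues V E \<longleftrightarrow>
     (\<exists>f. (\<exists>v\<in>V. f v \<noteq> 0) \<and> (\<forall>v\<in>V. nbr_sum f v = (1 - \<mu>) * real (deg V E v) * f v))"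
proof -
  have "norm_laplacian V E f v = \<mu> * f v \<longleftrightarrow> nbr_sum f v = (1 - \<mu>) * real (deg V E v) * f v"
    if "v \<in> V" for f v
    using real_deg_pos[OF that]
    unfolding norm_laplacian_def nbr_sum_def by (auto simp: field_simps)
  then show ?thesis
    unfolding nlap_eigenvalues_def by auto
qed

lemma normalized_eigenfunction:
  assumes "\<mu> \<in> nlap_eigenvalues V E"
  obtains e where "deg_inner e e = 1"
    and "\<forall>v\<in>V. nbr_sum e v = (1 - \<mu>) * real (deg V E v) * e v"
proof -
  obtain f v0 where v0: "v0 \<in> V" "f v0 \<noteq> 0"
    and f: "\<forall>v\<in>V. nbr_sum f v = (1 - \<mu>) * real (deg V E v) * f v"
    using assms nlap_eigenvalues_iff by blast
  have "deg_inner f f \<noteq> 0"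
    using deg_inner_eq_0_imp_zero v0 by blast
  then have pos: "deg_inner f f > 0"
    using deg_inner_nonneg[of f] by linarith
  define e where "e = (\<lambda>z. (1 / sqrt (deg_inner f f)) * f z)"
  have "deg_inner e e = 1"
    using pos unfolding e_def deg_inner_scale by (simp add: power_divide)
  moreover have "\<forall>v\<in>V. nbr_sum e v = (1 - \<mu>) * real (deg V E v) * e v"
    unfolding e_def nbr_sum_scale using f by simp
  ultimately show ?thesis
    using that by blast
qed

lemma eigenfunctions_orthogonal:
  assumes "\<forall>v\<in>V. nbr_sum e v = (1 - \<mu>) * real (deg V E v) * e v"
    and "\<forall>v\<in>V. nbr_sum e' v = (1 - \<mu>') * real (deg V E v) * e' v"
    and "\<mu> \<noteq> \<mu>'"
  shows "deg_inner e e' = 0"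
proof -
  have "(1 - \<mu>) * deg_inner e e' = (\<Sum>z\<in>V. nbr_sum e z * e' z)"
    unfolding deg_inner_def sum_distrib_left using assms(1) by (intro sum.cong) auto
  also have "\<dots> = (\<Sum>z\<in>V. e z * nbr_sum e' z)"
    by (rule sum_nbr_sum_mult_commute)
  also have "\<dots> = (1 - \<mu>') * deg_inner e e'"
    unfolding deg_inner_def sum_distrib_left using assms(2) by (intro sum.cong) auto
  finally show ?thesis
    using assms(3) by auto
qed

lemma deg_inner_sum_left:
  "deg_inner (\<lambda>z. \<Sum>i\<in>F. c i * e i z) g = (\<Sum>i\<in>F. c i * deg_inner (e i) g)"
  unfolding deg_inner_def sum_distrib_left sum_distrib_right
  by (subst sum.swap) (simp add: mult_ac)

lemma deg_inner_point:
  assumes "x \<in> V"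
  shows "deg_inner (\<lambda>z. if z = x then 1 else 0) g = real (deg V E x) * g x"
proof -
  have "deg_inner (\<lambda>z. if z = x then 1 else 0) g = (\<Sum>z\<in>V. if z = x then real (deg V E x) * g x else 0)"
    unfolding deg_inner_def by (intro sum.cong) auto
  then show ?thesis
    using assms finite_V by simp
qed

text \<open>Bessel's inequality for the point mass at \<open>x\<close>.\<close>
lemma orthonormal_pointwise_bound:
  assumes "finite F"
    and orth: "\<And>i j. i \<in> F \<Longrightarrow> j \<in> F \<Longrightarrow> deg_inner (e i) (e j) = (if i = j then 1 else 0)"
    and x: "x \<in> V"
  shows "(\<Sum>i\<in>F. real (deg V E x) * (e i x)\<^sup>2) \<le> 1"
proof -
  define d where "d = real (deg V E x)"
  define \<delta> where "\<delta> = (\<lambda>z. if z = x then 1 else (0::real))"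
  define c where "c i = d * e i x" for i
  define P where "P = (\<lambda>z. \<Sum>i\<in>F. c i * e i z)"
  have d: "d > 0"
    using real_deg_pos[OF x] by (simp add: d_def)
  have P_e: "deg_inner P (e j) = c j" if "j \<in> F" for j
    using that \<open>finite F\<close> by (simp add: P_def deg_inner_sum_left orth if_distrib cong: if_cong)
  have "deg_inner \<delta> P = (\<Sum>i\<in>F. (c i)\<^sup>2)"
    using x by (simp add: \<delta>_def deg_inner_point P_def c_def d_def sum_distrib_left power2_eq_square
        mult_ac)
  moreover have "deg_inner P P = (\<Sum>i\<in>F. c i * deg_inner (e i) P)"
    by (rule deg_inner_sum_left[of c e F P, folded P_def])
  moreover have "\<dots> = (\<Sum>i\<in>F. (c i)\<^sup>2)"
    using P_e by (simp add: deg_inner_commute[of _ P] power2_eq_square)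
  moreover have "deg_inner \<delta> \<delta> = d"
    using x by (simp add: \<delta>_def deg_inner_point d_def)
  moreover have "0 \<le> deg_inner (\<lambda>z. \<delta> z + (-1) * P z) (\<lambda>z. \<delta> z + (-1) * P z)"
    by (rule deg_inner_nonneg)
  ultimately have "(\<Sum>i\<in>F. (c i)\<^sup>2) \<le> d"
    unfolding deg_inner_add_scaled by simp
  also have "(\<Sum>i\<in>F. (c i)\<^sup>2) = d * (\<Sum>i\<in>F. d * (e i x)\<^sup>2)"
    by (simp add: c_def sum_distrib_left power2_eq_square mult_ac)
  finally show ?thesis
    using d by (simp add: d_def)
qed

lemma finite_nlap_eigenvalues: "finite (nlap_eigenvalues V E)"
proof (rule ccontr)
  let ?S = "nlap_eigenvalues V E"
  assume "infinite ?S"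
  then obtain F where F: "finite F" "card F = card V + 1" "F \<subseteq> ?S"
    using infinite_arbitrarily_large by blast
  have "\<forall>\<mu>\<in>?S. \<exists>e. deg_inner e e = 1 \<and> (\<forall>v\<in>V. nbr_sum e v = (1 - \<mu>) * real (deg V E v) * e v)"
    using normalized_eigenfunction by metis
  then obtain e where e: "\<And>\<mu>. \<mu> \<in> ?S \<Longrightarrow> deg_inner (e \<mu>) (e \<mu>) = 1 \<and>
      (\<forall>v\<in>V. nbr_sum (e \<mu>) v = (1 - \<mu>) * real (deg V E v) * e \<mu> v)"
    by metis
  have orth: "deg_inner (e i) (e j) = (if i = j then 1 else 0)" if "i \<in> F" "j \<in> F" for i j
    using e[of i] e[of j] that F(3) eigenfunctions_orthogonal[of "e i" i "e j" j] by auto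
  have "real (card F) = (\<Sum>i\<in>F. deg_inner (e i) (e i))"
    using orth by simp
  also have "\<dots> = (\<Sum>x\<in>V. \<Sum>i\<in>F. real (deg V E x) * (e i x)\<^sup>2)"
    unfolding deg_inner_def by (subst sum.swap) (simp add: power2_eq_square mult.assoc)
  also have "\<dots> \<le> (\<Sum>x\<in>V. 1)"
    using orthonormal_pointwise_bound[OF F(1) orth] by (intro sum_mono) auto
  finally show False
    using F(2) by simp
qed

lemma continuous_on_deg_inner: "continuous_on S (\<lambda>f. deg_inner f f)"
  unfolding deg_inner_def by (intro continuous_intros continuous_on_coordinate)

lemma continuous_on_adj_inner: "continuous_on S (\<lambda>f. adj_inner f f)"
  unfolding adj_inner_def nbr_sum_def divide_inverse
  by (intro continuous_intros continuous_on_coordinate)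

text \<open>The support condition makes the sphere compact in the product topology.\<close>
definition deg_sphere :: "('a \<Rightarrow> real) set" where
  "deg_sphere = {f. (\<forall>z. z \<notin> V \<longrightarrow> f z = 0) \<and> deg_inner f f = 1}"

lemma compact_deg_sphere: "compact deg_sphere"
proof -
  define B where "B = PiE UNIV (\<lambda>z. if z \<in> V then {-1..1::real} else {0})"
  have "compactin (product_topology (\<lambda>_. euclidean) UNIV) B"
    unfolding B_def by (rule iffD2[OF compactin_PiE], rule disjI2) auto
  then have "compact B"
    by (simp add: euclidean_product_topology)
  moreover have "closed deg_sphere"
  proof -
    have "deg_sphere = (\<Inter>z\<in>-V. {f. f z = 0}) \<inter> {f. deg_inner f f = 1}"
      by (auto simp: deg_sphere_def)
    then show ?thesis
      by (auto intro!: closed_INT closed_Collect_eq continuous_on_coordinate continuous_on_deg_inner)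
  qed
  moreover have "deg_sphere \<subseteq> B"
  proof
    fix f assume f: "f \<in> deg_sphere"
    have "\<bar>f z\<bar> \<le> 1" if z: "z \<in> V" for z
    proof -
      have "1 * (f z)\<^sup>2 \<le> real (deg V E z) * (f z)\<^sup>2"
        using deg_pos[OF z] by (intro mult_right_mono) auto
      also have "\<dots> = real (deg V E z) * f z * f z"
        by (simp add: power2_eq_square)
      also have "\<dots> \<le> deg_inner f f"
        unfolding deg_inner_def using finite_V z by (intro member_le_sum) (auto simp: mult.assoc)
      finally show ?thesis
        using f by (simp add: deg_sphere_def abs_square_le_1)
    qed
    then show "f \<in> B"
      using f by (auto simp: B_def deg_sphere_def abs_le_iff)
  qed
  ultimately show ?thesis
    by (metis compact_Int_closed inf.absorb_iff2)
qed

lemma deg_sphere_nonempty: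
  assumes "x \<in> V"
  shows "deg_sphere \<noteq> {}"
proof -
  define f where "f = (\<lambda>z. (1 / sqrt (real (deg V E x))) * (if z = x then 1 else 0))"
  have "deg_inner f f = 1"
    using assms real_deg_pos[OF assms]
    unfolding f_def deg_inner_scale deg_inner_point[OF assms] by (simp add: power_divide)
  then have "f \<in> deg_sphere"
    using assms by (auto simp: deg_sphere_def f_def)
  then show ?thesis
    by blast
qed

lemma deg_inner_restrict:
  "deg_inner (\<lambda>z. if z \<in> V then f z else 0) (\<lambda>z. if z \<in> V then f z else 0) = deg_inner f f"
  unfolding deg_inner_def by (intro sum.cong) auto

lemma adj_inner_restrict:
  "adj_inner (\<lambda>z. if z \<in> V then f z else 0) (\<lambda>z. if z \<in> V then f z else 0) = adj_inner f f"
  unfolding adj_inner_def nbr_sum_restrict ..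

lemma adj_inner_ge_min_mult_deg_inner:
  assumes g: "g \<in> deg_sphere" "\<forall>f\<in>deg_sphere. adj_inner g g \<le> adj_inner f f"
  shows "adj_inner g g * deg_inner h h \<le> adj_inner h h"
proof -
  define h' where "h' = (\<lambda>z. if z \<in> V then h z else 0)"
  show ?thesis
  proof (cases "deg_inner h h = 0")
    case True
    then show ?thesis
      using adj_inner_nonneg[of h] by simp
  next
    case False
    then have pos: "deg_inner h' h' > 0"
      using deg_inner_nonneg[of h] by (simp add: h'_def deg_inner_restrict)
    define k where "k = (\<lambda>z. (1 / sqrt (deg_inner h' h')) * h' z)"
    have "deg_inner k k = 1"
      using pos unfolding k_def deg_inner_scale by (simp add: power_divide)
    then have "k \<in> deg_sphere"
      by (simp add: deg_sphere_def k_def h'_def)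
    then have "adj_inner g g \<le> adj_inner k k"
      using g by blast
    also have "\<dots> = adj_inner h' h' / deg_inner h' h'"
      using pos unfolding k_def adj_inner_scale by (simp add: power_divide)
    finally show ?thesis
      using pos by (simp add: h'_def deg_inner_restrict adj_inner_restrict pos_le_divide_eq)
  qed
qed


lemma nbr_sum_point:
  assumes "x \<in> V"
  shows "nbr_sum (\<lambda>y. if y = x then 1 else 0) z = (if E x z then 1 else 0)"
proof -
  have "nbr_sum (\<lambda>y. if y = x then 1 else 0) z = (\<Sum>y\<in>V. if y = x then (if E z x then 1 else 0) else 0)"
    unfolding nbr_sum_eq_sum_V by (intro sum.cong) auto
  then show ?thesis
    using assms finite_V edge_sym by simp
qed

lemma adj_inner_point:
  assumes "x \<in> V"
  shows "adj_inner g (\<lambda>z. if z = x then 1 else 0) = nbr_sum (\<lambda>z. nbr_sum g z / real (deg V E z)) x"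
  unfolding adj_inner_def nbr_sum_eq_sum_V[of _ x] nbr_sum_point[OF assms]
  by (intro sum.cong) auto

lemma minimizer_euler_lagrange:
  assumes g: "g \<in> deg_sphere" "\<forall>f\<in>deg_sphere. adj_inner g g \<le> adj_inner f f" and x: "x \<in> V"
  shows "nbr_sum (\<lambda>z. nbr_sum g z / real (deg V E z)) x = adj_inner g g * real (deg V E x) * g x"
proof -
  define \<delta> where "\<delta> = (\<lambda>z. if z = x then 1 else (0::real))"
  let ?c = "adj_inner g g"
  have g1: "deg_inner g g = 1"
    using g(1) by (simp add: deg_sphere_def)
  have "2 * (adj_inner g \<delta> - ?c * deg_inner g \<delta>) * t
          + (adj_inner \<delta> \<delta> - ?c * deg_inner \<delta> \<delta>) * t\<^sup>2 \<ge> 0" for t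
    using adj_inner_ge_min_mult_deg_inner[OF g, of "\<lambda>z. g z + t * \<delta> z"] g1
    unfolding adj_inner_add_scaled deg_inner_add_scaled by (simp add: algebra_simps)
  then have "2 * (adj_inner g \<delta> - ?c * deg_inner g \<delta>) = 0"
    by (rule linear_plus_quadratic_nonneg_imp_zero)
  then show ?thesis
    using x by (simp add: \<delta>_def adj_inner_point deg_inner_commute[of g] deg_inner_point)
qed

text \<open>The Euler--Lagrange equation says \<open>(D\<inverse>A)\<^sup>2g = s\<^sup>2g\<close>, so either \<open>h = (D\<inverse>A + s)g\<close> is an
  eigenfunction of \<open>D\<inverse>A\<close> for \<open>s\<close>, or \<open>h = 0\<close> and \<open>g\<close> is one for \<open>-s\<close>.\<close>
lemma minimizer_eigenvalue:
  assumes g: "g \<in> deg_sphere" "\<forall>f\<in>deg_sphere. adj_inner g g \<le> adj_inner f f"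
  obtains \<mu> where "\<mu> \<in> nlap_eigenvalues V E" and "\<bar>1 - \<mu>\<bar> = sqrt (adj_inner g g)"
proof -
  define s where "s = sqrt (adj_inner g g)"
  have s: "s \<ge> 0" "s\<^sup>2 = adj_inner g g"
    using adj_inner_nonneg[of g] by (auto simp: s_def)
  define h where "h = (\<lambda>z. nbr_sum g z / real (deg V E z) + s * g z)"
  have h_eigen: "nbr_sum h v = (1 - (1 - s)) * real (deg V E v) * h v" if v: "v \<in> V" for v
  proof -
    have "nbr_sum h v = s\<^sup>2 * real (deg V E v) * g v + s * nbr_sum g v"
      unfolding h_def nbr_sum_add_scaled minimizer_euler_lagrange[OF g v] s(2) ..
    then show ?thesis
      using real_deg_pos[OF v] by (simp add: h_def field_simps power2_eq_square)
  qed
  show ?thesis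
  proof (cases "\<exists>v\<in>V. h v \<noteq> 0")
    case True
    then have "1 - s \<in> nlap_eigenvalues V E"
      unfolding nlap_eigenvalues_iff using h_eigen by blast
    then show ?thesis
      using that s by (simp add: s_def)
  next
    case False
    have g_eigen: "nbr_sum g v = (1 - (1 + s)) * real (deg V E v) * g v" if v: "v \<in> V" for v
      using False v real_deg_pos[OF v] by (auto simp: h_def field_simps add_eq_0_iff)
    have "\<exists>v\<in>V. g v \<noteq> 0"
    proof (rule ccontr)
      assume "\<not> (\<exists>v\<in>V. g v \<noteq> 0)"
      then have "deg_inner g g = 0"
        by (simp add: deg_inner_def)
      then show False
        using g(1) by (simp add: deg_sphere_def)
    qed
    then have "1 + s \<in> nlap_eigenvalues V E"
      unfolding nlap_eigenvalues_iff using g_eigen by blast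
    then show ?thesis
      using that s by (simp add: s_def)
  qed
qed

theorem spectral_eps_squared_bound: "(spectral_eps V E)\<^sup>2 * deg_inner f f \<le> adj_inner f f"
proof (cases "V = {}")
  case True
  then show ?thesis
    unfolding deg_inner_def adj_inner_def by simp
next
  case False
  then obtain g where g: "g \<in> deg_sphere" "\<forall>h\<in>deg_sphere. adj_inner g g \<le> adj_inner h h"
    using continuous_attains_inf[OF compact_deg_sphere _ continuous_on_adj_inner] deg_sphere_nonempty
    by blast
  obtain \<mu> where \<mu>: "\<mu> \<in> nlap_eigenvalues V E" "\<bar>1 - \<mu>\<bar> = sqrt (adj_inner g g)"
    using minimizer_eigenvalue[OF g] .
  have fin: "finite ((\<lambda>\<mu>. \<bar>1 - \<mu>\<bar>) ` nlap_eigenvalues V E)"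
    using finite_nlap_eigenvalues by simp
  have "spectral_eps V E \<le> sqrt (adj_inner g g)"
    unfolding spectral_eps_def using \<mu> fin by (metis Min_le image_eqI)
  moreover have "0 \<le> spectral_eps V E"
    unfolding spectral_eps_def using \<mu> fin by (subst Min_ge_iff) auto
  ultimately have "(spectral_eps V E)\<^sup>2 \<le> adj_inner g g"
    using adj_inner_nonneg[of g] by (metis power_mono real_sqrt_pow2)
  then show ?thesis
    using adj_inner_ge_min_mult_deg_inner[OF g, of f] deg_inner_nonneg[of f]
    by (meson mult_right_mono order_trans)
qed

lemma deg_outside_V:
  assumes "z \<notin> V"
  shows "deg V E z = 0"
proof -
  have "nbhd V E z = {}"
    using assms edge_in_V unfolding nbhd_def by blast
  then show ?thesis
    by (simp add: deg_def)
qed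

lemma spectral_eps_local_bound:
  assumes C: "finite C" "C \<subseteq> V" "\<And>x. x \<notin> C \<Longrightarrow> f x = 0"
    and Z: "finite Z" "\<And>y. y \<in> C \<Longrightarrow> nbhd V E y \<subseteq> Z"
    and L: "\<And>z. z \<in> Z \<Longrightarrow> 0 < L z \<and> L z \<le> real (deg V E z)"
  shows "(spectral_eps V E)\<^sup>2 * (\<Sum>z\<in>C. real (deg V E z) * (f z)\<^sup>2)
    \<le> (\<Sum>z\<in>Z. (\<Sum>y\<in>C. if E y z then f y else 0)\<^sup>2 / L z)"
proof -
  have ZV: "Z \<subseteq> V"
  proof
    fix z assume "z \<in> Z"
    then have "0 < real (deg V E z)"
      using L[of z] by linarith
    then show "z \<in> V"
      using deg_outside_V by fastforce
  qed
  have nbr_sum_f: "nbr_sum f z = (\<Sum>y\<in>C. if E y z then f y else 0)" for z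
  proof -
    have "nbr_sum f z = (\<Sum>y\<in>C. if E z y then f y else 0)"
      unfolding nbr_sum_eq_sum_V using C finite_V by (intro sum.mono_neutral_right) auto
    then show ?thesis
      by (simp add: edge_sym[of z])
  qed
  have nbr_sum_outside: "nbr_sum f z = 0" if "z \<notin> Z" for z
  proof -
    have "\<forall>y\<in>C. \<not> E y z"
      using that Z(2) mem_nbhd_iff by blast
    then show ?thesis
      unfolding nbr_sum_f by simp
  qed
  have "deg_inner f f = (\<Sum>z\<in>C. real (deg V E z) * (f z)\<^sup>2)"
    unfolding deg_inner_def power2_eq_square mult.assoc using C finite_V
    by (intro sum.mono_neutral_right) auto
  then have "(spectral_eps V E)\<^sup>2 * (\<Sum>z\<in>C. real (deg V E z) * (f z)\<^sup>2) \<le> adj_inner f f"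
    using spectral_eps_squared_bound[of f] by simp
  also have "adj_inner f f = (\<Sum>z\<in>Z. (nbr_sum f z)\<^sup>2 / real (deg V E z))"
    unfolding adj_inner_def power2_eq_square using ZV finite_V nbr_sum_outside
    by (intro sum.mono_neutral_right) auto
  also have "\<dots> \<le> (\<Sum>z\<in>Z. (nbr_sum f z)\<^sup>2 / L z)"
    using L ZV real_deg_pos by (intro sum_mono divide_left_mono mult_pos_pos) auto
  finally show ?thesis
    unfolding nbr_sum_f .
qed

lemma edge_iff_of_nbhd_eq: "nbhd V E y = S \<Longrightarrow> E y z \<longleftrightarrow> z \<in> S"
  using mem_nbhd_iff by blast

lemma in_V_of_nbhd_eq: "nbhd V E y = insert x S \<Longrightarrow> y \<in> V \<and> x \<in> V \<and> S \<subseteq> V"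
  using nbhd_subset_V mem_nbhd_iff edge_in_V by blast

lemma nbhd_of_deg_2:
  assumes "deg V E x = 2" and "E x y"
  obtains p where "nbhd V E x = {y, p}" and "p \<noteq> y"
proof -
  obtain p q where "nbhd V E x = {p, q}" "p \<noteq> q"
    using assms(1) by (auto simp: deg_def card_2_iff)
  moreover have "y \<in> nbhd V E x"
    using assms(2) mem_nbhd_iff by blast
  ultimately show ?thesis
    using that by (auto simp: insert_commute)
qed

lemma nbhd_of_deg_2_eq:
  assumes "deg V E x = 2" and "E x y" and "E x z" and "y \<noteq> z"
  shows "nbhd V E x = {y, z}"
proof -
  obtain p where "nbhd V E x = {y, p}"
    using nbhd_of_deg_2[OF assms(1,2)] .
  moreover have "z \<in> nbhd V E x"
    using assms(3) mem_nbhd_iff by blast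
  ultimately show ?thesis
    using assms(4) by auto
qed


lemma nbhd_of_deg_3_two:
  assumes "deg V E x = 3" and "E x y" and "E x z" and "y \<noteq> z"
  obtains p where "nbhd V E x = {y, z, p}" and "p \<notin> {y, z}"
proof -
  have yz: "{y, z} \<subseteq> nbhd V E x"
    using assms(2,3) mem_nbhd_iff by blast
  then have "card (nbhd V E x - {y, z}) = 1"
    using assms(1,4) finite_nbhd by (simp add: card_Diff_subset deg_def)
  then obtain p where p: "nbhd V E x - {y, z} = {p}"
    by (rule card_1_singletonE)
  then have "nbhd V E x = {y, z, p}"
    using yz by blast
  then show ?thesis
    using that p by blast
qed

lemma nbhd_of_deg_3:
  assumes "deg V E x = 3" and "E x y"
  obtains p q where "nbhd V E x = {y, p, q}" and "distinct [y, p, q]"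
proof -
  have "nbhd V E x \<noteq> {y}"
    using assms(1) by (auto simp: deg_def)
  then obtain z where "E x z" "z \<noteq> y"
    using assms(2) mem_nbhd_iff by blast
  then obtain p where "nbhd V E x = {y, z, p}" and "p \<notin> {y, z}"
    using nbhd_of_deg_3_two[OF assms(1,2)] by metis
  then show ?thesis
    using that \<open>z \<noteq> y\<close> by auto
qed

lemma connected_edge_closed_eq_V:
  assumes conn: "connected_graph V E" and S: "S \<subseteq> V" "x \<in> S"
    and closed: "\<And>y z. y \<in> S \<Longrightarrow> E y z \<Longrightarrow> z \<in> S"
  shows "S = V"
proof -
  have "y \<in> S" if "y \<in> V" for y
  proof -
    have "(\<lambda>a b. a \<in> V \<and> b \<in> V \<and> E a b)\<^sup>*\<^sup>* x y"
      using conn S that unfolding connected_graph_def by blast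
    then show ?thesis
      by (induction rule: rtranclp_induct) (use S closed in auto)
  qed
  then show ?thesis
    using S by blast
qed

lemma graph_iso_book_3:
  assumes conn: "connected_graph V E"
    and u: "nbhd V E u = {v, a}" and v: "nbhd V E v = {u, w}" and w: "nbhd V E w = {v, b, c}"
    and a: "nbhd V E a = {u, a1, a2}" and b: "nbhd V E b = {w, a1}" and c: "nbhd V E c = {w, a2}"
    and a1: "nbhd V E a1 = {a, b}" and a2: "nbhd V E a2 = {a, c}"
    and d: "distinct [u, v, w, a, b, c, a1, a2]"
  shows "graph_iso V E (book_V 3) (book_E 3)"
proof -
  let ?S = "{u, v, w, a, b, c, a1, a2}"
  note d' = distinct_rev[THEN iffD2, OF d]
  have "?S = V"
  proof (rule connected_edge_closed_eq_V[OF conn])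
    show "?S \<subseteq> V"
      using in_V_of_nbhd_eq[OF u] in_V_of_nbhd_eq[OF w] in_V_of_nbhd_eq[OF a] by auto
    show "u \<in> ?S"
      by simp
    show "z \<in> ?S" if "y \<in> ?S" "E y z" for y z
      using that u v w a b c a1 a2 mem_nbhd_iff by auto
  qed
  moreover define \<phi> where "\<phi> y = (if y = w then BX else if y = a then BY
      else if y = v then BV 1 else if y = u then BW 1
      else if y = b then BV 2 else if y = a1 then BW 2
      else if y = c then BV 3 else BW 3)" for y
  moreover have "bij_betw \<phi> ?S (book_V 3)"
    using d d' unfolding bij_betw_def inj_on_def book_V_def \<phi>_def
    by (auto simp: atLeastAtMost_iff numeral_3_eq_3 le_Suc_eq)
  moreover have "\<forall>x\<in>?S. \<forall>y\<in>?S. E x y \<longleftrightarrow> book_E 3 (\<phi> x) (\<phi> y)"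
    using d d' unfolding book_E_def \<phi>_def
    by (simp add: edge_iff_of_nbhd_eq[OF u] edge_iff_of_nbhd_eq[OF v] edge_iff_of_nbhd_eq[OF w]
        edge_iff_of_nbhd_eq[OF a] edge_iff_of_nbhd_eq[OF b] edge_iff_of_nbhd_eq[OF c]
        edge_iff_of_nbhd_eq[OF a1] edge_iff_of_nbhd_eq[OF a2])
  ultimately show ?thesis
    unfolding graph_iso_def by blast
qed


end

section \<open>Excluded local configurations\<close>

locale half_eps_graph = nonisolated_graph +
  assumes spectral_eps_half: "spectral_eps V E = 1/2"
    and deg_ge_2: "z \<in> V \<Longrightarrow> 2 \<le> deg V E z"
begin

text \<open>Each configuration below is excluded by a test function supported on a small set \<open>C\<close>,
  using lower bounds \<open>L\<close> for the degrees on \<open>Z \<supseteq> N(C)\<close>. The simplifier evaluates both sides;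
  it needs the distinctness of the vertices in both orientations, hence \<open>distinct_rev\<close>.\<close>
lemma test_function_bound:
  assumes "finite C" "C \<subseteq> V" "\<forall>x. x \<notin> C \<longrightarrow> f x = 0"
    and "finite Z" "\<forall>y\<in>C. nbhd V E y \<subseteq> Z"
    and "\<forall>z\<in>Z. 0 < L z \<and> L z \<le> real (deg V E z)"
  shows "(\<Sum>z\<in>C. real (deg V E z) * (f z)\<^sup>2) / 4
    \<le> (\<Sum>z\<in>Z. (\<Sum>y\<in>C. if E y z then f y else 0)\<^sup>2 / L z)"
  using spectral_eps_local_bound[of C f Z L] assms
  by (simp add: spectral_eps_half power2_eq_square)

lemma no_deg2_pair_sharing_nbr:
  assumes x: "nbhd V E x = {m, p}" and y: "nbhd V E y = {m, q}"
    and q: "3 \<le> deg V E q" and d: "distinct [x, y, m, p, q]"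
  shows False
proof -
  have V: "x \<in> V" "y \<in> V" "m \<in> V" "p \<in> V" "q \<in> V"
    using in_V_of_nbhd_eq[OF x] in_V_of_nbhd_eq[OF y] by auto
  have "deg V E x = 2" "deg V E y = 2"
    using x y d by (auto simp: deg_def)
  then show False
    using d distinct_rev[THEN iffD2, OF d] V q deg_ge_2[of m] deg_ge_2[of p]
      test_function_bound[of "{x, y}" "\<lambda>z. if z = x then 1 else if z = y then -1 else 0"
        "{m, p, q}" "\<lambda>z. if z = q then 3 else 2"]
    by (simp add: edge_iff_of_nbhd_eq[OF x] edge_iff_of_nbhd_eq[OF y] x y)
qed

lemma no_deg2_deg3_sharing_two_nbrs:
  assumes u: "nbhd V E u = {v, a}" and "a \<noteq> v"
    and w: "deg V E w = 3" "E w v" "E w a" and "u \<noteq> w"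
  shows False
proof -
  obtain c where w': "nbhd V E w = {v, a, c}" and "c \<notin> {v, a}"
    using nbhd_of_deg_3_two[OF w] \<open>a \<noteq> v\<close> by metis
  have "\<not> E u w"
    using edge_iff_of_nbhd_eq[OF u, of w] w(2,3) edge_irrefl by auto
  moreover have "E w c" "E u v" "E u a"
    using w' u mem_nbhd_iff by blast+
  ultimately have d: "distinct [u, w, v, a, c]"
    using \<open>a \<noteq> v\<close> \<open>c \<notin> {v, a}\<close> \<open>u \<noteq> w\<close> w(2,3) edge_irrefl edge_sym by fastforce
  have V: "u \<in> V" "w \<in> V" "v \<in> V" "a \<in> V" "c \<in> V"
    using in_V_of_nbhd_eq[OF u] in_V_of_nbhd_eq[OF w'] by auto
  have "deg V E u = 2"
    using u \<open>a \<noteq> v\<close> by (simp add: deg_def)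
  then show False
    using d distinct_rev[THEN iffD2, OF d] V w(1) deg_ge_2[of v] deg_ge_2[of a] deg_ge_2[of c]
      test_function_bound[of "{u, w}" "\<lambda>z. if z = u then 1 else if z = w then -1 else 0"
        "{v, a, c}" "\<lambda>z. 2"]
    by (simp add: edge_iff_of_nbhd_eq[OF u] edge_iff_of_nbhd_eq[OF w'] u w')
qed

lemma deg_le_3_of_common_nbr:
  assumes u: "nbhd V E u = {v, a}" and w: "nbhd V E w = {v, b, c}"
    and d: "distinct [u, w, v, a, b, c]"
  shows "deg V E a \<le> 3"
proof (rule ccontr)
  assume "\<not> deg V E a \<le> 3"
  moreover have V: "u \<in> V" "w \<in> V" "v \<in> V" "a \<in> V" "b \<in> V" "c \<in> V"
    using in_V_of_nbhd_eq[OF u] in_V_of_nbhd_eq[OF w] by auto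
  moreover have "deg V E u = 2" "deg V E w = 3"
    using u w d by (auto simp: deg_def)
  ultimately show False
    using d distinct_rev[THEN iffD2, OF d] deg_ge_2[of v] deg_ge_2[of b] deg_ge_2[of c]
      test_function_bound[of "{u, w}" "\<lambda>z. if z = u then 3 else if z = w then -2 else 0"
        "{v, a, b, c}" "\<lambda>z. if z = a then 4 else 2"]
    by (simp add: edge_iff_of_nbhd_eq[OF u] edge_iff_of_nbhd_eq[OF w] u w)
qed

lemma deg_eq_2_of_common_nbr:
  assumes u: "nbhd V E u = {v, a}" and w: "nbhd V E w = {v, b, c}"
    and d: "distinct [u, w, v, a, b, c]" and a: "3 \<le> deg V E a"
  shows "deg V E b = 2"
proof (rule ccontr)
  have V: "u \<in> V" "w \<in> V" "v \<in> V" "a \<in> V" "b \<in> V" "c \<in> V"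
    using in_V_of_nbhd_eq[OF u] in_V_of_nbhd_eq[OF w] by auto
  assume "deg V E b \<noteq> 2"
  then have "3 \<le> deg V E b"
    using deg_ge_2[OF V(5)] by linarith
  moreover have "deg V E u = 2" "deg V E w = 3"
    using u w d by (auto simp: deg_def)
  ultimately show False
    using d distinct_rev[THEN iffD2, OF d] V a deg_ge_2[of v] deg_ge_2[of c]
      test_function_bound[of "{u, w}" "\<lambda>z. if z = u then 1 else if z = w then -1 else 0"
        "{v, a, b, c}" "\<lambda>z. if z = a then 3 else if z = b then 3 else 2"]
    by (simp add: edge_iff_of_nbhd_eq[OF u] edge_iff_of_nbhd_eq[OF w] u w)
qed

lemma deg_third_nbr_of_triangle:
  assumes u: "nbhd V E u = {v, w}" and v: "nbhd V E v = {u, w}" and w: "nbhd V E w = {u, v, c}"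
    and d: "distinct [u, v, w, c]"
  shows "deg V E c = 2"
proof (rule ccontr)
  have V: "u \<in> V" "v \<in> V" "w \<in> V" "c \<in> V"
    using in_V_of_nbhd_eq[OF u] in_V_of_nbhd_eq[OF w] by auto
  assume "deg V E c \<noteq> 2"
  then have "3 \<le> deg V E c"
    using deg_ge_2[OF V(4)] by linarith
  moreover have "deg V E u = 2" "deg V E v = 2" "deg V E w = 3"
    using u v w d by (auto simp: deg_def)
  ultimately show False
    using d distinct_rev[THEN iffD2, OF d] V
      test_function_bound[of "{u, v, w}" "\<lambda>z. if z = u then 1 else if z = v then 1 else if z = w then -1 else 0"
        "{u, v, w, c}" "\<lambda>z. if z = w \<or> z = c then 3 else 2"]
    by (simp add: edge_iff_of_nbhd_eq[OF u] edge_iff_of_nbhd_eq[OF v] edge_iff_of_nbhd_eq[OF w] u v w)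
qed

lemma no_triangle_2_2_3:
  assumes u: "nbhd V E u = {v, w}" and v: "nbhd V E v = {u, w}" and "deg V E w = 3"
  shows False
proof -
  have "E u v" "E u w" "E v w"
    using u v mem_nbhd_iff by blast+
  then obtain c where w: "nbhd V E w = {u, v, c}" and "c \<notin> {u, v}"
    using nbhd_of_deg_3_two[OF \<open>deg V E w = 3\<close>] edge_sym edge_irrefl by metis
  then have "E w c"
    using mem_nbhd_iff by blast
  then have d: "distinct [u, v, w, c]"
    using \<open>E u v\<close> \<open>E u w\<close> \<open>E v w\<close> \<open>c \<notin> {u, v}\<close> edge_irrefl by fastforce
  have "deg V E c = 2"
    using deg_third_nbr_of_triangle[OF u v w d] .
  moreover have "E c w"
    using \<open>E w c\<close> edge_sym by simp
  ultimately obtain e where e: "nbhd V E c = {w, e}" "e \<noteq> w"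
    by (rule nbhd_of_deg_2)
  then have "E c e"
    using mem_nbhd_iff by blast
  then have d': "distinct [u, v, w, c, e]"
    using d e(2) edge_irrefl edge_sym edge_iff_of_nbhd_eq[OF u] edge_iff_of_nbhd_eq[OF v] by auto
  have V: "u \<in> V" "v \<in> V" "w \<in> V" "c \<in> V" "e \<in> V"
    using in_V_of_nbhd_eq[OF u] in_V_of_nbhd_eq[OF w] in_V_of_nbhd_eq[OF e(1)] by auto
  have "deg V E u = 2" "deg V E v = 2"
    using u v d by (auto simp: deg_def)
  then show False
    using d' distinct_rev[THEN iffD2, OF d'] V \<open>deg V E w = 3\<close> \<open>deg V E c = 2\<close> deg_ge_2[of e]
      test_function_bound[of "{u, v, w, c}"
        "\<lambda>z. if z = u then -1 else if z = v then -1 else if z = w then 1 else if z = c then 1 else 0"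
        "{u, v, w, c, e}" "\<lambda>z. if z = w then 3 else 2"]
    by (simp add: edge_iff_of_nbhd_eq[OF u] edge_iff_of_nbhd_eq[OF v] edge_iff_of_nbhd_eq[OF w]
        edge_iff_of_nbhd_eq[OF e(1)] u v w e(1))
qed

lemma other_nbr_of_deg2_nbr_in_branch:
  assumes u: "nbhd V E u = {v, a}" and w: "nbhd V E w = {v, b, c}" and x: "nbhd V E x = {a, y}"
    and a: "3 \<le> deg V E a" and d: "distinct [u, w, x]" "distinct [v, a, b, c]" and y: "y \<notin> {v, a}"
  shows "y \<in> {b, c}"
proof (rule ccontr)
  assume "y \<notin> {b, c}"
  then have d': "distinct [v, a, b, c, y]"
    using d(2) y by auto
  have V: "u \<in> V" "w \<in> V" "x \<in> V" "v \<in> V" "a \<in> V" "b \<in> V" "c \<in> V" "y \<in> V"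
    using in_V_of_nbhd_eq[OF u] in_V_of_nbhd_eq[OF w] in_V_of_nbhd_eq[OF x] by auto
  have deg: "deg V E u = 2" "deg V E w = 3" "deg V E x = 2"
    using u w x d' by (auto simp: deg_def)
  show False
    using d(1) distinct_rev[THEN iffD2, OF d(1)] d' distinct_rev[THEN iffD2, OF d'] V deg a
      deg_ge_2[of v] deg_ge_2[of b] deg_ge_2[of c] deg_ge_2[of y]
      test_function_bound[of "{u, w, x}" "\<lambda>z. if z = u then 3 else if z = w then -2 else if z = x then -3 else 0"
        "{v, a, b, c, y}" "\<lambda>z. if z = a then 3 else 2"]
    by (simp add: edge_iff_of_nbhd_eq[OF u] edge_iff_of_nbhd_eq[OF w] edge_iff_of_nbhd_eq[OF x] u w x)
qed

lemma path_2_2_3_frame: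
  assumes uv: "E u v" and vw: "E v w" and "u \<noteq> w"
    and deg: "deg V E u = 2" "deg V E v = 2" "deg V E w = 3"
  obtains a b c where "nbhd V E u = {v, a}" and "nbhd V E v = {u, w}" and "nbhd V E w = {v, b, c}"
    and "distinct [u, v, w, a, b, c]"
proof -
  obtain a where u: "nbhd V E u = {v, a}" and "a \<noteq> v"
    using nbhd_of_deg_2[OF deg(1) uv] .
  have v: "nbhd V E v = {u, w}"
    using nbhd_of_deg_2_eq[OF deg(2)] uv vw \<open>u \<noteq> w\<close> edge_sym by blast
  obtain b c where w: "nbhd V E w = {v, b, c}" and "distinct [v, b, c]"
    using nbhd_of_deg_3[OF deg(3)] vw edge_sym by blast
  have "a \<noteq> w"
    using no_triangle_2_2_3[OF _ v deg(3)] u by blast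
  have "\<not> E w a"
    using no_deg2_deg3_sharing_two_nbrs[OF u \<open>a \<noteq> v\<close> deg(3)] vw edge_sym \<open>u \<noteq> w\<close> by blast
  moreover have "\<not> E w u"
    using edge_iff_of_nbhd_eq[OF u, of w] edge_sym \<open>a \<noteq> w\<close> vw edge_irrefl by auto
  moreover have "E u a" "E w b" "E w c"
    using u w mem_nbhd_iff by blast+
  ultimately have "distinct [u, v, w, a, b, c]"
    using \<open>distinct [v, b, c]\<close> \<open>a \<noteq> v\<close> \<open>a \<noteq> w\<close> \<open>u \<noteq> w\<close> uv vw edge_irrefl by fastforce
  then show ?thesis
    using that u v w by blast
qed

end

section \<open>The 3-book\<close>

locale book_frame = half_eps_graph +
  fixes u v w a b c :: 'a
  assumes nbhd_u: "nbhd V E u = {v, a}" and nbhd_v: "nbhd V E v = {u, w}"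
    and nbhd_w: "nbhd V E w = {v, b, c}" and distinct_frame: "distinct [u, v, w, a, b, c]"
begin

lemma deg_w: "deg V E w = 3"
  using nbhd_w distinct_frame by (simp add: deg_def)

lemma deg_a: "deg V E a = 3"
proof -
  have "deg V E a \<le> 3"
    using deg_le_3_of_common_nbr[OF nbhd_u nbhd_w] distinct_frame by auto
  moreover have "deg V E a \<noteq> 2"
  proof
    assume "deg V E a = 2"
    moreover have "E a u"
      using nbhd_u mem_nbhd_iff edge_sym by blast
    ultimately obtain p where a: "nbhd V E a = {u, p}" and "p \<noteq> u"
      by (rule nbhd_of_deg_2)
    then have "E a p"
      using mem_nbhd_iff by blast
    then have "distinct [a, v, u, p, w]"
      using \<open>p \<noteq> u\<close> distinct_frame edge_irrefl edge_sym edge_iff_of_nbhd_eq[OF nbhd_v]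
        edge_iff_of_nbhd_eq[OF nbhd_w] by fastforce
    then show False
      using no_deg2_pair_sharing_nbr[OF a nbhd_v] deg_w by simp
  qed
  moreover have "2 \<le> deg V E a"
    using deg_ge_2 in_V_of_nbhd_eq[OF nbhd_u] by blast
  ultimately show ?thesis
    by linarith
qed

lemma deg_b_c: "x \<in> {b, c} \<Longrightarrow> deg V E x = 2"
  using deg_eq_2_of_common_nbr[OF nbhd_u nbhd_w]
    deg_eq_2_of_common_nbr[OF nbhd_u nbhd_w[unfolded insert_commute[of b]]] distinct_frame deg_a
  by auto

lemma not_edge_a: "x \<in> {v, w, b, c} \<Longrightarrow> \<not> E a x"
proof
  assume x: "x \<in> {v, w, b, c}" and "E a x"
  then have "x \<in> {b, c}"
    using distinct_frame edge_sym edge_iff_of_nbhd_eq[OF nbhd_v] edge_iff_of_nbhd_eq[OF nbhd_w] by auto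
  moreover have "E x w"
    using \<open>x \<in> {b, c}\<close> nbhd_w mem_nbhd_iff edge_sym by blast
  ultimately have "nbhd V E x = {w, a}"
    using nbhd_of_deg_2_eq[OF deg_b_c] \<open>E a x\<close> edge_sym distinct_frame by force
  moreover have "nbhd V E v = {w, u}"
    using nbhd_v by auto
  ultimately show False
    using no_deg2_pair_sharing_nbr[of v w u x a] deg_a distinct_frame \<open>x \<in> {b, c}\<close> by auto
qed

lemma distinct_frame_nbr_a:
  assumes "E a x" and "x \<noteq> u"
  shows "distinct [u, v, w, a, b, c, x]"
  using assms not_edge_a[of x] distinct_frame edge_irrefl by auto

lemma deg_nbr_a:
  assumes "E a x" and "x \<noteq> u"
  shows "deg V E x = 2"
proof -
  have "E a u"
    using nbhd_u mem_nbhd_iff edge_sym by blast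
  then obtain x' where a: "nbhd V E a = {u, x, x'}" and "x' \<notin> {u, x}"
    using nbhd_of_deg_3_two[OF deg_a] assms by metis
  then have "E a x'"
    using mem_nbhd_iff by blast
  then have "distinct [v, a, u, w, x, x']"
    using distinct_frame_nbr_a[OF assms] distinct_frame_nbr_a[of x'] \<open>x' \<notin> {u, x}\<close> by auto
  then show ?thesis
    using deg_eq_2_of_common_nbr[OF nbhd_v a] deg_w by simp
qed

lemma nbhd_nbr_a:
  assumes "E a x" and "x \<noteq> u"
  obtains y where "y \<in> {b, c}" and "nbhd V E x = {a, y}"
proof -
  obtain y where x: "nbhd V E x = {a, y}" and "y \<noteq> a"
    using nbhd_of_deg_2[OF deg_nbr_a[OF assms]] assms(1) edge_sym by blast
  have "y \<noteq> v"
    using x distinct_frame_nbr_a[OF assms] edge_sym edge_iff_of_nbhd_eq[OF nbhd_v] edge_iff_of_nbhd_eq[OF x]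
    by force
  then have "y \<in> {b, c}"
    using other_nbr_of_deg2_nbr_in_branch[OF nbhd_u nbhd_w x] deg_a distinct_frame_nbr_a[OF assms]
      \<open>y \<noteq> a\<close> by auto
  then show ?thesis
    using that x by blast
qed

lemma branch_vertex_other_nbr_unique:
  assumes "x \<in> {b, c}" and "E x p" "E x q" and "p \<noteq> w" "q \<noteq> w"
  shows "p = q"
proof -
  have "E x w"
    using assms(1) nbhd_w mem_nbhd_iff edge_sym by blast
  then have "nbhd V E x = {w, p}"
    using nbhd_of_deg_2_eq[OF deg_b_c[OF assms(1)]] assms(2,4) by blast
  then show ?thesis
    using assms(3,5) mem_nbhd_iff by blast
qed

lemma graph_iso_book_3_of_pages:
  assumes "connected_graph V E" and a: "nbhd V E a = {u, p, q}"
    and p: "nbhd V E p = {a, b}" and q: "nbhd V E q = {a, c}"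
    and d: "distinct [u, v, w, a, b, c, p, q]"
  shows "graph_iso V E (book_V 3) (book_E 3)"
proof -
  have "E b w" "E c w" "E b p" "E c q"
    using nbhd_w p q mem_nbhd_iff edge_sym by blast+
  moreover have "w \<noteq> p" "w \<noteq> q"
    using d by auto
  moreover have "deg V E b = 2" "deg V E c = 2"
    using deg_b_c by simp_all
  ultimately have "nbhd V E b = {w, p}" "nbhd V E c = {w, q}"
    using nbhd_of_deg_2_eq by blast+
  then show ?thesis
    using graph_iso_book_3[OF assms(1) nbhd_u nbhd_v nbhd_w a _ _ p q d] by blast
qed

lemma graph_iso_book_3_of_frame:
  assumes "connected_graph V E"
  shows "graph_iso V E (book_V 3) (book_E 3)"
proof -
  have "E a u"
    using nbhd_u mem_nbhd_iff edge_sym by blast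
  then obtain p q where a: "nbhd V E a = {u, p, q}" and "distinct [u, p, q]"
    using nbhd_of_deg_3[OF deg_a] by blast
  then have "E a p" "E a q"
    using mem_nbhd_iff by blast+
  moreover have "p \<noteq> u" "q \<noteq> u" "p \<noteq> q"
    using \<open>distinct [u, p, q]\<close> by auto
  ultimately have d: "distinct [u, v, w, a, b, c, p, q]"
    using distinct_frame_nbr_a[of p] distinct_frame_nbr_a[of q] by auto
  obtain y where y: "y \<in> {b, c}" "nbhd V E p = {a, y}"
    using nbhd_nbr_a[OF \<open>E a p\<close> \<open>p \<noteq> u\<close>] .
  obtain y' where y': "y' \<in> {b, c}" "nbhd V E q = {a, y'}"
    using nbhd_nbr_a[OF \<open>E a q\<close> \<open>q \<noteq> u\<close>] .
  have "E y p" "E y' q"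
    using y(2) y'(2) mem_nbhd_iff edge_sym by blast+
  then have "y \<noteq> y'"
    using branch_vertex_other_nbr_unique[OF y(1)] d by auto
  then have "y = b \<and> y' = c \<or> y = c \<and> y' = b"
    using y(1) y'(1) by blast
  then consider "nbhd V E p = {a, b}" "nbhd V E q = {a, c}"
    | "nbhd V E q = {a, b}" "nbhd V E p = {a, c}"
    using y(2) y'(2) by auto
  then show ?thesis
  proof cases
    case 1
    show ?thesis
      using graph_iso_book_3_of_pages[OF assms a 1 d] .
  next
    case 2
    moreover have "nbhd V E a = {u, q, p}" "distinct [u, v, w, a, b, c, q, p]"
      using a d by auto
    ultimately show ?thesis
      using graph_iso_book_3_of_pages[OF assms] by blast
  qed
qed

end

theorem mainTheorem11:
  fixes V :: "'a set" and E :: "'a \<Rightarrow> 'a \<Rightarrow> bool"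
  assumes "simple_graph V E"
    and "connected_graph V E"
    and "card V \<ge> 3"
    and "min_degree V E = 2"
    and "spectral_eps V E = 1/2"
    and "u \<in> V" and "v \<in> V" and "w \<in> V"
    and "u \<noteq> v" and "v \<noteq> w" and "u \<noteq> w"
    and "E u v" and "E v w"
    and "deg V E u = 2" and "deg V E v = 2" and "deg V E w = 3"
  shows "graph_iso V E (book_V 3) (book_E 3)"
proof -
  have deg_ge_2: "2 \<le> deg V E z" if "z \<in> V" for z
  proof -
    have "Min (deg V E ` V) \<le> deg V E z"
      using assms(1) that by (simp add: simple_graph_def)
    then show ?thesis
      using assms(4) by (simp add: min_degree_def)
  qed
  interpret half_eps_graph V E
    using assms(1,5) deg_ge_2 by unfold_locales fastforce+
  obtain a b c where "nbhd V E u = {v, a}" "nbhd V E v = {u, w}" "nbhd V E w = {v, b, c}"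
    and "distinct [u, v, w, a, b, c]"
    using path_2_2_3_frame[OF assms(12,13,11,14,15,16)] .
  then interpret book_frame V E u v w a b c
    by unfold_locales
  show ?thesis
    using graph_iso_book_3_of_frame[OF assms(2)] .
qed

end
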